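(* Let $\alpha_1,\alpha_2>0$ with $\alpha_1\neq\alpha_2$. Then $x=\tfrac12$ is the unique solution in $(0,1)$ of $F_{\alpha_1}(x)=F_{\alpha_2}(x)$.
   Context: For $\alpha>0$, $F_\alpha(t)=\int_0^t\frac{[x(1-x)]^{\alpha-1}}{B(\alpha,\alpha)}dx$ is the distribution function of the symmetric Beta$(\alpha,\alpha)$ law, $B$ being the Beta function. *)

theory Defs
  imports "HOL-Analysis.Analysis"
begin

definition beta_cdf :: "real \<Rightarrow> real \<Rightarrow> real" where
  "beta_cdf \<alpha> t = integral {0..t} (\<lambda>x. (x * (1 - x)) powr (\<alpha> - 1) / Beta \<alpha> \<alpha>)"

end

theory Submission
  imports Defs
begin

text \<open>Let \<open>f\<^sub>a\<close> be the Beta(\<open>a,a\<close>) density and \<open>F\<^sub>a\<close> its distribution function.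
  For \<open>a < b\<close> the ratio \<open>f\<^sub>b / f\<^sub>a\<close> is a positive constant times \<open>(t(1-t)) powr (b-a)\<close>, so the
  densities cross at most once on \<open>(0,1/2]\<close>. Fix \<open>0 < x < 1/2\<close>. If \<open>f\<^sub>b(x) \<le> f\<^sub>a(x)\<close>, then
  \<open>f\<^sub>b < f\<^sub>a\<close> on \<open>(0,x)\<close> and hence \<open>F\<^sub>b(x) < F\<^sub>a(x)\<close>. Otherwise \<open>f\<^sub>b > f\<^sub>a\<close> on \<open>(x,1-x)\<close>,
  and since by symmetry \<open>2 F\<^sub>c(x)\<close> is \<open>1\<close> minus the mass of \<open>(x,1-x)\<close>, again \<open>F\<^sub>b(x) < F\<^sub>a(x)\<close>.
  Symmetry turns this into \<open>F\<^sub>a(x) < F\<^sub>b(x)\<close> for \<open>x > 1/2\<close>, while \<open>F\<^sub>c(1/2) = 1/2\<close>.\<close>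

text \<open>Continuity is required only away from \<open>c\<close>: for \<open>a < 1\<close> the density \<open>f\<^sub>a\<close> is unbounded at \<open>0\<close>.\<close>

lemma integral_less_real_left_open:
  fixes f g :: "real \<Rightarrow> real"
  assumes "c < d" "f integrable_on {c..d}" "g integrable_on {c..d}"
    and "continuous_on {c<..d} f" "continuous_on {c<..d} g"
    and "f c \<le> g c" "\<And>t. t \<in> {c<..<d} \<Longrightarrow> f t < g t"
  shows "integral {c..d} f < integral {c..d} g"
proof -
  define m where "m = (c + d) / 2"
  have m: "c < m" "m < d" using assms(1) by (auto simp: m_def)
  have "integral {c..m} f \<le> integral {c..m} g"
  proof (rule integral_le)
    show "f integrable_on {c..m}" "g integrable_on {c..m}"
      using assms(2,3) m by (auto intro: integrable_subinterval_real)
    show "f t \<le> g t" if "t \<in> {c..m}" for t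
    proof (cases "t = c")
      case False
      with that m have "t \<in> {c<..<d}" by auto
      then show ?thesis using assms(7) by (simp add: less_imp_le)
    qed (use assms(6) in simp)
  qed
  moreover have "integral {m..d} f < integral {m..d} g"
  proof (rule integral_less_real)
    have "{m..d} \<subseteq> {c<..d}" using m by auto
    then show "continuous_on {m..d} f" "continuous_on {m..d} g"
      using assms(4,5) by (auto intro: continuous_on_subset)
    show "{m<..<d} \<noteq> {}" using m by simp
    show "f t < g t" if "t \<in> {m<..<d}" for t
      using that m assms(7) by simp
  qed
  moreover have split: "integral {c..m} h + integral {m..d} h = integral {c..d} h"
    if "h integrable_on {c..d}" for h :: "real \<Rightarrow> real"
    using Henstock_Kurzweil_Integration.integral_combine[OF _ _ that] m by simp
  ultimately show ?thesis using split[OF assms(2)] split[OF assms(3)] by linarith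
qed

lemma integral_reflect_unit:
  fixes f :: "real \<Rightarrow> 'a::banach" and x :: real
  shows "integral {x..1} f = integral {0..1-x} (\<lambda>t. f (1 - t))"
proof -
  have "integral {0..1-x} (\<lambda>t. f (1 - t)) = integral {-1..-x} (\<lambda>t. f (- t))"
    using integral_shift_real_ivl[of "-1" "-1" "-x" "\<lambda>t. f (- t)"] by simp
  then show ?thesis by simp
qed

lemma Beta_real_pos: "a > 0 \<Longrightarrow> b > 0 \<Longrightarrow> Beta a b > (0::real)"
  by (simp add: Beta_def)

definition beta_density :: "real \<Rightarrow> real \<Rightarrow> real" where
  "beta_density a t = (t * (1 - t)) powr (a - 1) / Beta a a"

lemma beta_cdf_eq_integral_density: "beta_cdf a x = integral {0..x} (beta_density a)"
  unfolding beta_cdf_def beta_density_def ..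

lemma has_integral_beta_density:
  assumes "a > 0"
  shows "(beta_density a has_integral 1) {0..1}"
proof -
  have "((\<lambda>t. t powr (a - 1) * (1 - t) powr (a - 1) / Beta a a) has_integral Beta a a / Beta a a) {0..1}"
    using has_integral_Beta_real[OF assms assms] by (rule has_integral_divide)
  then have "((\<lambda>t. t powr (a - 1) * (1 - t) powr (a - 1) / Beta a a) has_integral 1) {0..1}"
    using Beta_real_pos[OF assms assms] by simp
  then show ?thesis
    by (rule has_integral_eq[rotated]) (simp add: beta_density_def powr_mult)
qed

lemma beta_density_integrable_on:
  assumes "a > 0" "0 \<le> c" "d \<le> 1"
  shows "beta_density a integrable_on {c..d}"
proof (rule integrable_subinterval_real)
  show "beta_density a integrable_on {0..1}"
    using has_integral_beta_density[OF assms(1)] by blast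
qed (use assms in auto)

lemma beta_density_reflect: "beta_density a (1 - t) = beta_density a t"
  unfolding beta_density_def by (simp add: mult.commute)

lemma beta_density_zero: "beta_density a 0 = 0"
  by (simp add: beta_density_def)

lemma beta_density_pos:
  assumes "a > 0" "0 < t" "t < 1"
  shows "beta_density a t > 0"
  using assms Beta_real_pos[OF assms(1) assms(1)] by (simp add: beta_density_def)

lemma continuous_on_beta_density:
  assumes "S \<subseteq> {0<..<1}"
  shows "continuous_on S (beta_density a)"
  unfolding beta_density_def divide_inverse using assms by (intro continuous_intros) auto

lemma beta_cdf_add_reflect:
  assumes "a > 0" "0 \<le> x" "x \<le> 1"
  shows "beta_cdf a x + beta_cdf a (1 - x) = 1"
proof -
  have "beta_cdf a x + integral {x..1} (beta_density a) = integral {0..1} (beta_density a)"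
    unfolding beta_cdf_eq_integral_density
    using assms beta_density_integrable_on[OF assms(1), of 0 1]
    by (intro Henstock_Kurzweil_Integration.integral_combine) auto
  moreover have "integral {x..1} (beta_density a) = beta_cdf a (1 - x)"
    by (simp add: integral_reflect_unit beta_density_reflect beta_cdf_eq_integral_density)
  moreover have "integral {0..1} (beta_density a) = 1"
    using has_integral_beta_density[OF assms(1)] by blast
  ultimately show ?thesis by simp
qed

lemma beta_cdf_half: "a > 0 \<Longrightarrow> beta_cdf a (1/2) = 1/2"
  using beta_cdf_add_reflect[of a "1/2"] by simp

lemma beta_cdf_double_add_middle:
  assumes "a > 0" "0 \<le> x" "x \<le> 1/2"
  shows "2 * beta_cdf a x + integral {x..1-x} (beta_density a) = 1"
proof -
  have "beta_cdf a x + integral {x..1-x} (beta_density a) = beta_cdf a (1 - x)"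
    unfolding beta_cdf_eq_integral_density
    using assms beta_density_integrable_on[OF assms(1), of 0 "1 - x"]
    by (intro Henstock_Kurzweil_Integration.integral_combine) auto
  then show ?thesis using beta_cdf_add_reflect[of a x] assms by simp
qed

lemma times_one_minus_less:
  fixes u v :: real
  assumes "u < v" "u + v < 1"
  shows "u * (1 - u) < v * (1 - v)"
proof -
  have "v * (1 - v) - u * (1 - u) = (v - u) * (1 - u - v)" by algebra
  also have "\<dots> > 0" using assms by simp
  finally show ?thesis by simp
qed

lemma beta_density_ratio:
  assumes "a > 0"
  shows "beta_density b t = Beta a a / Beta b b * (t * (1 - t)) powr (b - a) * beta_density a t"
proof -
  have "beta_density b t = (t * (1 - t)) powr (b - a) * (t * (1 - t)) powr (a - 1) / Beta b b"
    by (simp add: beta_density_def powr_add[symmetric])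
  also have "\<dots> = Beta a a / Beta b b * (t * (1 - t)) powr (b - a) * beta_density a t"
    using Beta_real_pos[OF assms assms] unfolding beta_density_def by (simp add: field_simps)
  finally show ?thesis .
qed

lemma beta_density_single_crossing:
  assumes "0 < a" "a < b" "0 < s" "s < 1" "0 < t" "t < 1" "t * (1 - t) < s * (1 - s)"
  shows "beta_density b s \<le> beta_density a s \<Longrightarrow> beta_density b t < beta_density a t"
    and "beta_density a t \<le> beta_density b t \<Longrightarrow> beta_density a s < beta_density b s"
proof -
  define r where "r u = Beta a a / Beta b b * (u * (1 - u)) powr (b - a)" for u
  have "(t * (1 - t)) powr (b - a) < (s * (1 - s)) powr (b - a)"
    using assms by (intro powr_less_mono2) auto
  moreover have "Beta a a / Beta b b > 0"
    using Beta_real_pos[of a a] Beta_real_pos[of b b] assms(1,2) by simp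
  ultimately have r_less: "r t < r s"
    unfolding r_def by (rule mult_strict_left_mono)
  have ratio: "beta_density b u = r u * beta_density a u" for u
    using beta_density_ratio[OF assms(1), of b] by (simp add: r_def)
  have pos_s: "beta_density a s > 0" and pos_t: "beta_density a t > 0"
    using beta_density_pos assms by auto
  show "beta_density b t < beta_density a t" if "beta_density b s \<le> beta_density a s"
  proof -
    have "r s \<le> 1" using that pos_s unfolding ratio by (simp add: mult_le_cancel_right1)
    then show ?thesis using r_less pos_t unfolding ratio by (simp add: mult_less_cancel_right1)
  qed
  show "beta_density a s < beta_density b s" if "beta_density a t \<le> beta_density b t"
  proof -
    have "1 \<le> r t" using that pos_t unfolding ratio by (simp add: mult_le_cancel_right2)
    then show ?thesis using r_less pos_s unfolding ratio by (simp add: mult_less_cancel_right2)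
  qed
qed

lemma beta_cdf_less_below_half:
  assumes "0 < a" "a < b" "0 < x" "x < 1/2"
  shows "beta_cdf b x < beta_cdf a x"
proof (cases "beta_density b x \<le> beta_density a x")
  case True
  have "integral {0..x} (beta_density b) < integral {0..x} (beta_density a)"
  proof (rule integral_less_real_left_open)
    show "beta_density b integrable_on {0..x}" "beta_density a integrable_on {0..x}"
      using assms by (auto intro: beta_density_integrable_on)
    show "continuous_on {0<..x} (beta_density b)" "continuous_on {0<..x} (beta_density a)"
      using assms by (auto intro!: continuous_on_beta_density)
    show "beta_density b t < beta_density a t" if "t \<in> {0<..<x}" for t
      using that assms True times_one_minus_less[of t x]
      by (intro beta_density_single_crossing(1)[of a b x t]) auto
  qed (use assms in \<open>simp_all add: beta_density_zero\<close>)
  then show ?thesis by (simp add: beta_cdf_eq_integral_density)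
next
  case False
  have "integral {x..1-x} (beta_density a) < integral {x..1-x} (beta_density b)"
  proof (rule integral_less_real)
    show "continuous_on {x..1-x} (beta_density b)" "continuous_on {x..1-x} (beta_density a)"
      using assms by (auto intro!: continuous_on_beta_density)
    show "{x<..<1-x} \<noteq> {}" using assms by simp
    show "beta_density a t < beta_density b t" if "t \<in> {x<..<1-x}" for t
      using that assms False times_one_minus_less[of x t]
      by (intro beta_density_single_crossing(2)[of a b t x]) auto
  qed
  then show ?thesis
    using beta_cdf_double_add_middle[of a x] beta_cdf_double_add_middle[of b x] assms by simp
qed

lemma beta_cdf_greater_above_half:
  assumes "0 < a" "a < b" "1/2 < x" "x < 1"
  shows "beta_cdf a x < beta_cdf b x"
  using beta_cdf_less_below_half[of a b "1 - x"] assms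
    beta_cdf_add_reflect[of a "1 - x"] beta_cdf_add_reflect[of b "1 - x"] by simp

lemma beta_cdf_eq_imp_half:
  assumes "0 < a" "0 < b" "a \<noteq> b" "0 < x" "x < 1" "beta_cdf a x = beta_cdf b x"
  shows "x = 1/2"
proof (rule ccontr)
  assume "x \<noteq> 1/2"
  have neq: "beta_cdf c x \<noteq> beta_cdf d x" if "0 < c" "c < d" for c d
  proof (cases "x < 1/2")
    case True
    then show ?thesis using beta_cdf_less_below_half[OF that assms(4)] by simp
  next
    case False
    with \<open>x \<noteq> 1/2\<close> have "1/2 < x" by simp
    then show ?thesis using beta_cdf_greater_above_half[OF that _ assms(5)] by simp
  qed
  from \<open>a \<noteq> b\<close> consider "a < b" | "b < a" by linarith
  then show False using neq assms(1,2,6) by cases metis+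
qed

theorem proposition3:
  fixes \<alpha>1 \<alpha>2 :: real
  assumes "\<alpha>1 > 0" and "\<alpha>2 > 0" and "\<alpha>1 \<noteq> \<alpha>2"
  shows "{x \<in> {0<..<1}. beta_cdf \<alpha>1 x = beta_cdf \<alpha>2 x} = {1/2}"
  using beta_cdf_eq_imp_half[OF assms] beta_cdf_half[OF assms(1)] beta_cdf_half[OF assms(2)]
  by auto

end
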